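(* Let $\{e_n\}_{n\in\mathbb{Z}}$ be i.i.d. real random variables whose common distribution has a continuous, bounded, strictly positive density on $\mathbb{R}$. Let $q,d\ge1$ be integers and $r,\mu_1,\mu_2,\phi_1,\dots,\phi_q,\psi_1,\dots,\psi_q\in\mathbb{R}$, and let $\{y_n\}_{n\in\mathbb{Z}}$ be the unique strictly stationary solution of $$y_n=\begin{cases}\mu_1+e_n+\sum_{i=1}^q\phi_ie_{n-i}, & \text{if } y_{n-d}\le r,\\ \mu_2+e_n+\sum_{i=1}^q\psi_ie_{n-i}, & \text{if } y_{n-d}>r.\end{cases}$$ Then there exists $\rho\in(0,1)$ such that for all $u,v\in\mathbb{R}$, $$\big|\mathbb{P}(y_0\le u,\ y_k\le v)-\mathbb{P}(y_0\le u)\,\mathbb{P}(y_k\le v)\big|=O(\rho^k)\quad\text{as } k\to\infty.$$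
   Context: A solution means a process on the same probability space as $\{e_n\}$ satisfying the equation almost surely for every $n$. Under the density assumption, with $a_n=\mu_2+e_n+\sum_{i=1}^q\psi_ie_{n-i}$ and $b_n=\mu_1+e_n+\sum_{i=1}^q\phi_ie_{n-i}$, one has $\mathbb{P}(a_n\le r, b_n\le r)+\mathbb{P}(a_n>r,b_n>r)\neq0$, so a unique strictly stationary ergodic solution exists. *)

theory Defs
  imports "HOL-Probability.Probability" "HOL-Library.Landau_Symbols"
begin

definition strictly_stationary :: "'a measure \<Rightarrow> (int \<Rightarrow> 'a \<Rightarrow> real) \<Rightarrow> bool" where
  "strictly_stationary M y \<longleftrightarrow>
     (\<forall>n. y n \<in> borel_measurable M) \<and>
     (\<forall>J h. finite J \<longrightarrow>
        distr M (PiM J (\<lambda>_. borel)) (\<lambda>\<omega>. restrict (\<lambda>j. y (j + h) \<omega>) J)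
      = distr M (PiM J (\<lambda>_. borel)) (\<lambda>\<omega>. restrict (\<lambda>j. y j \<omega>) J))"

end

theory Submission
  imports Defs
begin

text \<open>
  The proof is a regeneration argument.  Call time n a reset time of the noise path when
  e_n <= c (a suitable constant) and |e_(n-i)| <= 1 for i = 1..q: then both branches of the
  recursion are <= r at time n, whatever the regime was, so the regime at time n + d is known.
  Consequently, if some reset happens at one of the times n - d, n - 2d, ..., n - md, the value
  y_n coincides with the depth-m truncated recursion, a function of the noise on the window
  [n - md - q, n] only.  Resets at sparse times (spacing (q+1)d) involve disjoint blocks of
  independent noise and each has the same positive probability p, so the probability that no
  reset happens in a window of m = T(q+1) steps is at most (1 - p)^T.  For k > md + q the
  truncated values at times 0 and k are functions of disjoint parts of the noise, hence
  independent, and a perturbation estimate gives a covariance bound 4 (1 - p)^T.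
\<close>

lemma (in prob_space) prob_diff_le_exceptional:
  assumes "X \<in> events" "X' \<in> events" "N \<in> events"
    and "AE \<omega> in M. \<omega> \<notin> N \<longrightarrow> (\<omega> \<in> X \<longleftrightarrow> \<omega> \<in> X')"
  shows "\<bar>prob X - prob X'\<bar> \<le> prob N"
proof -
  have "prob X \<le> prob (X' \<union> N)"
    by (rule finite_measure_mono_AE) (use assms in auto)
  also have "\<dots> \<le> prob X' + prob N"
    by (rule measure_Un_le) (use assms in auto)
  finally have "prob X \<le> prob X' + prob N" .
  moreover have "prob X' \<le> prob (X \<union> N)"
    by (rule finite_measure_mono_AE) (use assms in auto)
  then have "prob X' \<le> prob X + prob N"
    using measure_Un_le[of X M N] assms by simp
  ultimately show ?thesis by linarith
qed

lemma (in prob_space) covariance_le_exceptional: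
  assumes ev: "A \<in> events" "A' \<in> events" "B \<in> events" "B' \<in> events" "N \<in> events" "N' \<in> events"
    and agreeA: "AE \<omega> in M. \<omega> \<notin> N \<longrightarrow> (\<omega> \<in> A \<longleftrightarrow> \<omega> \<in> A')"
    and agreeB: "AE \<omega> in M. \<omega> \<notin> N' \<longrightarrow> (\<omega> \<in> B \<longleftrightarrow> \<omega> \<in> B')"
    and indep: "prob (A' \<inter> B') = prob A' * prob B'"
  shows "\<bar>prob (A \<inter> B) - prob A * prob B\<bar> \<le> 2 * (prob N + prob N')"
proof -
  have "AE \<omega> in M. \<omega> \<notin> N \<union> N' \<longrightarrow> (\<omega> \<in> A \<inter> B \<longleftrightarrow> \<omega> \<in> A' \<inter> B')"
    using agreeA agreeB by eventually_elim auto
  then have "\<bar>prob (A \<inter> B) - prob (A' \<inter> B')\<bar> \<le> prob (N \<union> N')"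
    using ev by (intro prob_diff_le_exceptional) auto
  also have "\<dots> \<le> prob N + prob N'"
    using ev by (intro measure_Un_le) auto
  finally have joint: "\<bar>prob (A \<inter> B) - prob (A' \<inter> B')\<bar> \<le> prob N + prob N'" .
  have a: "\<bar>prob A - prob A'\<bar> \<le> prob N" and b: "\<bar>prob B - prob B'\<bar> \<le> prob N'"
    using ev by (intro prob_diff_le_exceptional agreeA agreeB; simp)+
  have "\<bar>prob A * prob B - prob A' * prob B'\<bar>
        = \<bar>prob A * (prob B - prob B') + (prob A - prob A') * prob B'\<bar>"
    by (simp add: algebra_simps)
  also have "\<dots> \<le> prob A * \<bar>prob B - prob B'\<bar> + \<bar>prob A - prob A'\<bar> * prob B'"
    by (rule order_trans[OF abs_triangle_ineq]) (simp add: abs_mult)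
  also have "\<dots> \<le> 1 * prob N' + prob N * 1"
    by (intro add_mono mult_mono) (use a b in auto)
  finally have product: "\<bar>prob A * prob B - prob A' * prob B'\<bar> \<le> prob N + prob N'" by simp
  have "\<bar>prob (A \<inter> B) - prob A * prob B\<bar>
      \<le> \<bar>prob (A \<inter> B) - prob (A' \<inter> B')\<bar> + \<bar>prob A * prob B - prob A' * prob B'\<bar>"
    using indep abs_triangle_ineq4[of "prob (A \<inter> B) - prob (A' \<inter> B')" "prob A * prob B - prob A' * prob B'"]
    by simp
  also have "\<dots> \<le> (prob N + prob N') + (prob N + prob N')"
    using joint product by (rule add_mono)
  finally show ?thesis by simp
qed

lemma (in prob_space) prob_all_local_events:
  assumes ind: "indep_vars (\<lambda>_. N) X UNIV"
    and disj: "disjoint_family_on K T" and T: "finite T" "T \<noteq> {}"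
    and meas: "\<And>t. t \<in> T \<Longrightarrow> Measurable.pred (PiM (K t) (\<lambda>_. N)) (P t)"
    and local: "\<And>t x x'. t \<in> T \<Longrightarrow> (\<And>i. i \<in> K t \<Longrightarrow> x i = x' i) \<Longrightarrow> P t x = P t x'"
  shows "prob {\<omega> \<in> space M. \<forall>t\<in>T. P t (\<lambda>i. X i \<omega>)}
       = (\<Prod>t\<in>T. prob {\<omega> \<in> space M. P t (\<lambda>i. X i \<omega>)})"
proof -
  let ?R = "\<lambda>t \<omega>. restrict (\<lambda>i. X i \<omega>) (K t)"
  let ?S = "\<lambda>t. {x \<in> space (PiM (K t) (\<lambda>_. N)). P t x}"
  have "X i \<in> measurable M N" for i
    using ind by (simp add: indep_vars_def)
  then have X_space: "X i \<omega> \<in> space N" if "\<omega> \<in> space M" for i \<omega>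
    using that by (rule measurable_space)
  have event_eq: "{\<omega> \<in> space M. P t (\<lambda>i. X i \<omega>)} = ?R t -` ?S t \<inter> space M" if "t \<in> T" for t
    using local[OF that, of "\<lambda>i. X i _" "?R t _"] by (auto simp: space_PiM X_space)
  have "{\<omega> \<in> space M. \<forall>t\<in>T. P t (\<lambda>i. X i \<omega>)} = (\<Inter>t\<in>T. ?R t -` ?S t \<inter> space M)"
    using event_eq T(2) by blast
  moreover have "prob (\<Inter>t\<in>T. ?R t -` ?S t \<inter> space M) = (\<Prod>t\<in>T. prob (?R t -` ?S t \<inter> space M))"
    by (rule indep_varsD[OF indep_vars_restrict[OF ind _ disj]]) (use meas T in \<open>auto simp: pred_def\<close>)
  ultimately have "prob {\<omega> \<in> space M. \<forall>t\<in>T. P t (\<lambda>i. X i \<omega>)}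
      = (\<Prod>t\<in>T. prob (?R t -` ?S t \<inter> space M))" by simp
  also have "\<dots> = (\<Prod>t\<in>T. prob {\<omega> \<in> space M. P t (\<lambda>i. X i \<omega>)})"
    using event_eq by (intro prod.cong) auto
  finally show ?thesis .
qed

lemma (in prob_space) prob_two_local_events:
  assumes ind: "indep_vars (\<lambda>_. N) X UNIV" and disj: "K1 \<inter> K2 = {}"
    and meas: "Measurable.pred (PiM K1 (\<lambda>_. N)) P1" "Measurable.pred (PiM K2 (\<lambda>_. N)) P2"
    and local1: "\<And>x x'. (\<And>i. i \<in> K1 \<Longrightarrow> x i = x' i) \<Longrightarrow> P1 x = P1 x'"
    and local2: "\<And>x x'. (\<And>i. i \<in> K2 \<Longrightarrow> x i = x' i) \<Longrightarrow> P2 x = P2 x'"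
  shows "prob {\<omega> \<in> space M. P1 (\<lambda>i. X i \<omega>) \<and> P2 (\<lambda>i. X i \<omega>)}
       = prob {\<omega> \<in> space M. P1 (\<lambda>i. X i \<omega>)} * prob {\<omega> \<in> space M. P2 (\<lambda>i. X i \<omega>)}"
proof -
  let ?K = "\<lambda>b. if b then K1 else K2" and ?P = "\<lambda>b. if b then P1 else P2"
  have "prob {\<omega> \<in> space M. \<forall>b\<in>UNIV. ?P b (\<lambda>i. X i \<omega>)}
      = (\<Prod>b\<in>UNIV. prob {\<omega> \<in> space M. ?P b (\<lambda>i. X i \<omega>)})"
  proof (rule prob_all_local_events[OF ind])
    show "disjoint_family_on ?K UNIV"
      using disj by (auto simp: disjoint_family_on_def)
    show "Measurable.pred (PiM (?K b) (\<lambda>_. N)) (?P b)" for b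
      using meas by (cases b) simp_all
    show "?P b x = ?P b x'" if "\<And>i. i \<in> ?K b \<Longrightarrow> x i = x' i" for b x x'
      using that local1[of x x'] local2[of x x'] by (cases b) auto
  qed simp_all
  moreover have "(\<forall>b\<in>UNIV. ?P b x) \<longleftrightarrow> P1 x \<and> P2 x" for x
    by (simp add: all_bool_eq conj_commute)
  ultimately show ?thesis by (simp add: UNIV_bool mult.commute)
qed

lemma density_interval_pos:
  fixes g :: "real \<Rightarrow> real"
  assumes "(\<lambda>x. ennreal (g x)) \<in> borel_measurable borel" "\<And>x. g x > 0" "a < b"
  shows "emeasure (density lborel (\<lambda>x. ennreal (g x))) {a..b} \<noteq> 0"
proof
  assume "emeasure (density lborel (\<lambda>x. ennreal (g x))) {a..b} = 0"
  then have "(\<integral>\<^sup>+x. ennreal (g x) * indicator {a..b} x \<partial>lborel) = 0"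
    using assms(1) by (simp add: emeasure_density)
  then have "AE x in lborel. ennreal (g x) * indicator {a..b} x = 0"
    using assms(1) by (simp add: nn_integral_0_iff_AE)
  then have "AE x in lborel. x \<notin> {a..b}"
  proof eventually_elim
    case (elim x)
    show ?case
    proof
      assume "x \<in> {a..b}"
      with elim have "ennreal (g x) = 0" by simp
      with assms(2)[of x] show False by simp
    qed
  qed
  moreover have "{x \<in> space lborel. x \<in> {a..b}} = {a..b}" by auto
  ultimately have "emeasure lborel {a..b} = 0"
    using emeasure_eq_0_AE[of "\<lambda>x. x \<in> {a..b}" lborel] by simp
  with \<open>a < b\<close> show False by simp
qed

text \<open>Geometric decay in blocks of length L is geometric decay: the sequence
  beta^((k - c) div L) is O(rho^k) for a suitable rho < 1 (essentially the L-th root of beta).\<close>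

lemma power_div_bigo_geometric:
  fixes \<beta> :: real and c L :: nat
  assumes "0 \<le> \<beta>" "\<beta> < 1" "0 < L"
  shows "\<exists>\<rho>. 0 < \<rho> \<and> \<rho> < 1 \<and> (\<lambda>k::nat. \<beta> ^ ((k - c) div L)) \<in> O(\<lambda>k. \<rho> ^ k)"
proof -
  define \<beta>' where "\<beta>' = max \<beta> (1/2)"
  define \<rho> where "\<rho> = root L \<beta>'"
  have \<beta>': "0 < \<beta>'" "\<beta>' < 1" "\<beta> \<le> \<beta>'" using assms by (auto simp: \<beta>'_def)
  have \<rho>: "0 < \<rho>" "\<rho> < 1" "\<rho> ^ L = \<beta>'"
    using assms(3) \<beta>' by (auto simp: \<rho>_def real_root_gt_zero)
  have "\<beta> ^ ((k - c) div L) \<le> (1 / \<rho> ^ (L + c)) * \<rho> ^ k" for k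
  proof -
    define T where "T = (k - c) div L"
    have "(k - c) mod L < L" using assms(3) by simp
    moreover have "L * T + (k - c) mod L = k - c"
      unfolding T_def by (rule mult_div_mod_eq)
    ultimately have k: "k \<le> L * T + (L + c)" by linarith
    have "\<beta> ^ T \<le> \<beta>' ^ T" using \<beta>'(3) assms(1) by (rule power_mono)
    also have "\<dots> = \<rho> ^ (L * T)"
      by (simp add: \<rho>(3)[symmetric] power_mult)
    also have "\<dots> = \<rho> ^ (L * T + (L + c)) / \<rho> ^ (L + c)"
      using \<rho>(1) by (simp add: power_add)
    also have "\<dots> \<le> \<rho> ^ k / \<rho> ^ (L + c)"
      using \<rho> k by (intro divide_right_mono power_decreasing) auto
    finally show ?thesis unfolding T_def by simp
  qed
  then have "(\<lambda>k::nat. \<beta> ^ ((k - c) div L)) \<in> O(\<lambda>k. \<rho> ^ k)"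
    using assms(1) \<rho> by (intro bigoI[of _ "1 / \<rho> ^ (L + c)"] always_eventually) simp
  with \<rho> show ?thesis by blast
qed

lemma sparse_windows_disjoint:
  fixes n :: int and q d :: nat
  assumes "d \<ge> 1"
  shows "disjoint_family_on
    (\<lambda>t. {n - int (t * (q + 1) * d) - int q .. n - int (t * (q + 1) * d)}) UNIV"
proof -
  have separated: "int (t * (q + 1) * d) + int q < int (t' * (q + 1) * d)" if "t < t'" for t t'
  proof -
    have "q + 1 \<le> (q + 1) * d" using mult_le_mono2[OF assms, of "q + 1"] by simp
    moreover have "(t + 1) * ((q + 1) * d) \<le> t' * ((q + 1) * d)"
      using that by (intro mult_le_mono1) simp
    moreover have "(t + 1) * ((q + 1) * d) = t * (q + 1) * d + (q + 1) * d"
      by (simp add: algebra_simps)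
    ultimately have "t * (q + 1) * d + q < t' * (q + 1) * d" by linarith
    then show ?thesis by linarith
  qed
  show ?thesis
    unfolding disjoint_family_on_def
  proof (intro ballI impI)
    fix t t' :: nat assume "t \<noteq> t'"
    then consider "t < t'" | "t' < t" by linarith
    then show "{n - int (t * (q + 1) * d) - int q .. n - int (t * (q + 1) * d)}
        \<inter> {n - int (t' * (q + 1) * d) - int q .. n - int (t' * (q + 1) * d)} = {}"
      by cases (use separated in fastforce)+
  qed
qed

definition ma_value :: "real \<Rightarrow> nat \<Rightarrow> (nat \<Rightarrow> real) \<Rightarrow> (int \<Rightarrow> real) \<Rightarrow> int \<Rightarrow> real" where
  "ma_value \<mu> q \<phi> x n = \<mu> + x n + (\<Sum>i=1..q. \<phi> i * x (n - int i))"

lemma ma_value_local: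
  assumes "\<And>j. n - int q \<le> j \<Longrightarrow> j \<le> n \<Longrightarrow> x j = x' j"
  shows "ma_value \<mu> q \<phi> x n = ma_value \<mu> q \<phi> x' n"
  unfolding ma_value_def using assms by (auto intro!: sum.cong)

lemma ma_value_measurable:
  assumes "{n - int q .. n} \<subseteq> J"
  shows "(\<lambda>x. ma_value \<mu> q \<phi> x n) \<in> borel_measurable (PiM J (\<lambda>_. borel))"
  unfolding ma_value_def using assms
  by (intro borel_measurable_add borel_measurable_sum borel_measurable_times measurable_const
        measurable_component_singleton) auto

lemma ma_value_le:
  assumes "x n \<le> r - \<bar>\<mu>\<bar> - (\<Sum>i=1..q. \<bar>\<phi> i\<bar>)" and "\<forall>i\<in>{1..q}. \<bar>x (n - int i)\<bar> \<le> 1"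
  shows "ma_value \<mu> q \<phi> x n \<le> r"
proof -
  have "(\<Sum>i=1..q. \<phi> i * x (n - int i)) \<le> (\<Sum>i=1..q. \<bar>\<phi> i\<bar>)"
  proof (rule sum_mono)
    fix i assume "i \<in> {1..q}"
    then have "\<bar>\<phi> i\<bar> * \<bar>x (n - int i)\<bar> \<le> \<bar>\<phi> i\<bar>"
      using assms(2) by (simp add: mult_left_le)
    then show "\<phi> i * x (n - int i) \<le> \<bar>\<phi> i\<bar>"
      by (metis abs_ge_self abs_mult order_trans)
  qed
  then show ?thesis
    using assms(1) abs_ge_self[of \<mu>] unfolding ma_value_def by linarith
qed

locale tma_recursion =
  fixes q d :: nat and r \<mu>1 \<mu>2 :: real and \<phi> \<psi> :: "nat \<Rightarrow> real"
begin

text \<open>One step of the recursion: the regime is selected by the value t observed d steps back.\<close>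

definition branch :: "(int \<Rightarrow> real) \<Rightarrow> int \<Rightarrow> real \<Rightarrow> real" where
  "branch x n t = (if t \<le> r then ma_value \<mu>1 q \<phi> x n else ma_value \<mu>2 q \<psi> x n)"

text \<open>The recursion truncated at depth m: started m delay-steps in the past in the low regime.\<close>

primrec trunc :: "(int \<Rightarrow> real) \<Rightarrow> int \<Rightarrow> nat \<Rightarrow> real" where
  "trunc x n 0 = ma_value \<mu>1 q \<phi> x n"
| "trunc x n (Suc m) = branch x n (trunc x (n - int d) m)"

text \<open>Reset times: the current shock is at most reset_level and the q lagged shocks are
  bounded by 1, so that both branches are below the threshold.\<close>

definition reset_level :: real where
  "reset_level = min (r - \<bar>\<mu>1\<bar> - (\<Sum>i=1..q. \<bar>\<phi> i\<bar>)) (r - \<bar>\<mu>2\<bar> - (\<Sum>i=1..q. \<bar>\<psi> i\<bar>))"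

definition reset :: "(int \<Rightarrow> real) \<Rightarrow> int \<Rightarrow> bool" where
  "reset x n \<longleftrightarrow> x n \<le> reset_level \<and> (\<forall>i\<in>{1..q}. \<bar>x (n - int i)\<bar> \<le> 1)"

lemma reset_ma_value_le:
  assumes "reset x n"
  shows "ma_value \<mu>1 q \<phi> x n \<le> r" and "ma_value \<mu>2 q \<psi> x n \<le> r"
  using assms by (auto simp: reset_def reset_level_def intro!: ma_value_le)

lemma reset_branch_le: "reset x n \<Longrightarrow> branch x n t \<le> r"
  by (simp add: branch_def reset_ma_value_le)

lemma reset_trunc_le: "trunc x n m \<le> r" if "reset x n"
  using that by (cases m) (simp_all add: reset_ma_value_le reset_branch_le)

lemma branch_local:
  assumes "\<And>j. n - int q \<le> j \<Longrightarrow> j \<le> n \<Longrightarrow> x j = x' j"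
  shows "branch x n t = branch x' n t"
  unfolding branch_def using ma_value_local[OF assms] by simp

lemma trunc_local:
  assumes "\<And>j. n - int (m * d) - int q \<le> j \<Longrightarrow> j \<le> n \<Longrightarrow> x j = x' j"
  shows "trunc x n m = trunc x' n m"
  using assms
proof (induction m arbitrary: n)
  case 0
  have "ma_value \<mu>1 q \<phi> x n = ma_value \<mu>1 q \<phi> x' n"
    by (rule ma_value_local) (rule 0; simp)
  then show ?case by simp
next
  case (Suc m)
  have depth: "int (Suc m * d) = int d + int (m * d)" by simp
  have "trunc x (n - int d) m = trunc x' (n - int d) m"
    by (rule Suc.IH) (rule Suc.prems; use depth in linarith)
  moreover have "branch x n t = branch x' n t" for t
    by (rule branch_local) (rule Suc.prems; use depth in linarith)
  ultimately show ?case by simp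
qed

lemma trunc_measurable:
  assumes "{n - int (m * d) - int q .. n} \<subseteq> J"
  shows "(\<lambda>x. trunc x n m) \<in> borel_measurable (PiM J (\<lambda>_. borel))"
  using assms
proof (induction m arbitrary: n)
  case 0
  then show ?case by (simp add: ma_value_measurable)
next
  case (Suc m)
  have depth: "int (Suc m * d) = int d + int (m * d)" by simp
  have "(\<lambda>x. trunc x (n - int d) m) \<in> borel_measurable (PiM J (\<lambda>_. borel))"
    by (rule Suc.IH, rule order_trans[OF _ Suc.prems]) (use depth in auto)
  moreover have "{n - int q .. n} \<subseteq> J"
    by (rule order_trans[OF _ Suc.prems]) (auto simp del: of_nat_mult)
  then have "(\<lambda>x. ma_value \<mu>1 q \<phi> x n) \<in> borel_measurable (PiM J (\<lambda>_. borel))"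
    "(\<lambda>x. ma_value \<mu>2 q \<psi> x n) \<in> borel_measurable (PiM J (\<lambda>_. borel))"
    by (rule ma_value_measurable)+
  ultimately show ?case by (simp add: branch_def)
qed

lemma reset_local:
  assumes "\<And>j. n - int q \<le> j \<Longrightarrow> j \<le> n \<Longrightarrow> x j = x' j"
  shows "reset x n = reset x' n"
  unfolding reset_def using assms by auto

lemma reset_measurable:
  assumes "{n - int q .. n} \<subseteq> J"
  shows "Measurable.pred (PiM J (\<lambda>_. borel)) (\<lambda>x. reset x n)"
proof -
  have "n \<in> J" "\<And>i. i \<in> {1..q} \<Longrightarrow> n - int i \<in> J" using assms by auto
  then show ?thesis unfolding reset_def by measurable
qed

text \<open>Being a reset time is a product condition on the coordinates of the window [n - q, n];
  this is what makes its probability computable.\<close>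

lemma reset_iff_window:
  "reset x n \<longleftrightarrow>
     (\<forall>t\<in>{n - int q..n}. x t \<in> (if t = n then {..reset_level} else {-1..1}))"
proof
  assume "reset x n"
  then have now: "x n \<le> reset_level" and lags: "\<forall>i\<in>{1..q}. \<bar>x (n - int i)\<bar> \<le> 1"
    unfolding reset_def by auto
  show "\<forall>t\<in>{n - int q..n}. x t \<in> (if t = n then {..reset_level} else {-1..1})"
  proof
    fix t assume t: "t \<in> {n - int q..n}"
    show "x t \<in> (if t = n then {..reset_level} else {-1..1})"
    proof (cases "t = n")
      case False
      with t have lag: "nat (n - t) \<in> {1..q}" "n - int (nat (n - t)) = t" by auto
      have "\<bar>x (n - int (nat (n - t)))\<bar> \<le> 1" using lags lag(1) by blast
      then have "\<bar>x t\<bar> \<le> 1" by (simp only: lag(2))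
      then show ?thesis using False by (simp add: abs_le_iff)
    qed (simp add: now)
  qed
next
  assume window: "\<forall>t\<in>{n - int q..n}. x t \<in> (if t = n then {..reset_level} else {-1..1})"
  have "\<bar>x (n - int i)\<bar> \<le> 1" if "i \<in> {1..q}" for i
    using window[rule_format, of "n - int i"] that by (auto simp: abs_le_iff)
  then show "reset x n"
    using window[rule_format, of n] by (auto simp: reset_def)
qed

lemma solution_le_iff_trunc:
  assumes sol: "\<And>n. z n = branch x n (z (n - int d))"
    and "reset x (n - int (j * d))" "j \<le> m"
  shows "z n \<le> r \<longleftrightarrow> trunc x n m \<le> r"
  using assms(2,3)
proof (induction m arbitrary: n j)
  case 0
  then have reset: "reset x n" by simp
  have "z n \<le> r"
    using sol[of n] reset_branch_le[OF reset] by (rule ord_eq_le_trans)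
  then show ?case using reset_trunc_le[OF reset, of 0] by simp
next
  case (Suc m)
  show ?case
  proof (cases j)
    case 0
    then have reset: "reset x n" using Suc.prems by simp
    have "z n \<le> r"
      using sol[of n] reset_branch_le[OF reset] by (rule ord_eq_le_trans)
    then show ?thesis using reset_trunc_le[OF reset, of "Suc m"] by simp
  next
    case (Suc j')
    then have shift: "n - int (j * d) = n - int d - int (j' * d)" by simp
    have "reset x (n - int d - int (j' * d))" using Suc.prems(1) by (simp only: shift)
    then have "z (n - int d) \<le> r \<longleftrightarrow> trunc x (n - int d) m \<le> r"
      using Suc.prems(2) \<open>j = Suc j'\<close> by (intro Suc.IH) simp_all
    then have "branch x n (z (n - int d)) = trunc x n (Suc m)"
      by (simp add: branch_def)
    with sol[of n] have "z n = trunc x n (Suc m)" by (rule trans)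
    then show ?thesis by simp
  qed
qed

lemma solution_eq_trunc:
  assumes sol: "\<And>n. z n = branch x n (z (n - int d))"
    and "reset x (n - int d - int (j * d))" "j < m"
  shows "z n = trunc x n m"
proof -
  obtain m' where m: "m = Suc m'" "j \<le> m'" using assms(3) by (cases m) auto
  have "z (n - int d) \<le> r \<longleftrightarrow> trunc x (n - int d) m' \<le> r"
    by (rule solution_le_iff_trunc[OF sol assms(2) m(2)])
  then have "branch x n (z (n - int d)) = trunc x n m"
    using m(1) by (simp add: branch_def)
  with sol[of n] show ?thesis by (rule trans)
qed

end

locale tma_model = tma_recursion q d r \<mu>1 \<mu>2 \<phi> \<psi> + prob_space M
  for q d :: nat and r \<mu>1 \<mu>2 :: real and \<phi> \<psi> :: "nat \<Rightarrow> real" and M :: "'a measure" +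
  fixes e y :: "int \<Rightarrow> 'a \<Rightarrow> real" and f :: "real \<Rightarrow> real"
  assumes indep: "indep_vars (\<lambda>_. borel) e UNIV"
    and dens: "\<And>n. distributed M lborel (e n) (\<lambda>x. ennreal (f x))"
    and f_pos: "\<And>x. f x > 0"
    and d_pos: "d \<ge> 1"
    and y_measurable [measurable]: "\<And>n. y n \<in> borel_measurable M"
    and sol: "\<And>n. AE \<omega> in M. y n \<omega> =
        (if y (n - int d) \<omega> \<le> r
         then \<mu>1 + e n \<omega> + (\<Sum>i=1..q. \<phi> i * e (n - int i) \<omega>)
         else \<mu>2 + e n \<omega> + (\<Sum>i=1..q. \<psi> i * e (n - int i) \<omega>))"
begin

abbreviation noise_path :: "'a \<Rightarrow> int \<Rightarrow> real" where
  "noise_path \<omega> \<equiv> \<lambda>j. e j \<omega>"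

abbreviation noise_law :: "real measure" where
  "noise_law \<equiv> density lborel (\<lambda>x. ennreal (f x))"

lemma e_measurable [measurable]: "e n \<in> borel_measurable M"
  using dens[of n] by (auto dest: distributed_measurable)

lemma noise_path_measurable: "noise_path \<in> measurable M (PiM UNIV (\<lambda>_. borel))"
  using measurable_restrict[of UNIV e M "\<lambda>_. borel"] by (simp add: restrict_UNIV)

lemma trunc_noise_path_measurable [measurable]:
  "(\<lambda>\<omega>. trunc (noise_path \<omega>) n m) \<in> borel_measurable M"
  using measurable_compose[OF noise_path_measurable trunc_measurable[of n m UNIV]] by simp

lemma reset_noise_path_measurable [measurable]:
  "Measurable.pred M (\<lambda>\<omega>. reset (noise_path \<omega>) n)"
  using measurable_compose[OF noise_path_measurable reset_measurable[of n UNIV]] by simp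

lemma AE_recursion: "AE \<omega> in M. \<forall>n. y n \<omega> = branch (noise_path \<omega>) n (y (n - int d) \<omega>)"
  unfolding branch_def ma_value_def by (subst AE_all_countable) (use sol in auto)

lemma AE_solution_eq_trunc:
  "AE \<omega> in M. \<forall>n m j. reset (noise_path \<omega>) (n - int d - int (j * d)) \<longrightarrow> j < m \<longrightarrow>
     y n \<omega> = trunc (noise_path \<omega>) n m"
  using AE_recursion
proof eventually_elim
  case (elim \<omega>)
  show ?case using solution_eq_trunc[OF elim[rule_format]] by blast
qed

lemma AE_le_iff_trunc:
  "AE \<omega> in M. \<omega> \<notin> {\<omega> \<in> space M. \<forall>j < m. \<not> reset (noise_path \<omega>) (n - int d - int (j * d))} \<longrightarrow>
     (\<omega> \<in> {\<omega> \<in> space M. y n \<omega> \<le> u} \<longleftrightarrow> \<omega> \<in> {\<omega> \<in> space M. trunc (noise_path \<omega>) n m \<le> u})"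
  using AE_solution_eq_trunc by eventually_elim fastforce

lemma f_measurable: "(\<lambda>x. ennreal (f x)) \<in> borel_measurable borel"
  using distributed_borel_measurable[OF dens[of 0]] by simp

lemma prob_noise: "S \<in> sets borel \<Longrightarrow> prob {\<omega> \<in> space M. e n \<omega> \<in> S} = measure noise_law S"
  using distributed_distr_eq_density[OF dens[of n]] measure_distr[of "e n" M lborel S]
  by (simp add: vimage_def Int_def conj_commute)

lemma noise_law_prob_space: "prob_space noise_law"
  using prob_space_distr[of "e 0" lborel] distributed_distr_eq_density[OF dens[of 0]] by simp

lemma noise_law_interval_pos:
  assumes "a < b" shows "measure noise_law {a..b} > 0"
proof -
  interpret noise: prob_space noise_law by (rule noise_law_prob_space)
  have "emeasure noise_law {a..b} \<noteq> 0"
    by (rule density_interval_pos[OF f_measurable f_pos assms])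
  then show ?thesis
    by (simp add: noise.emeasure_eq_measure zero_less_measure_iff)
qed

definition reset_prob :: real where
  "reset_prob = measure noise_law {..reset_level} * measure noise_law {-1..1} ^ q"

lemma reset_prob_pos: "reset_prob > 0"
proof -
  interpret noise: prob_space noise_law by (rule noise_law_prob_space)
  have "measure noise_law {reset_level - 1..reset_level} \<le> measure noise_law {..reset_level}"
    by (rule noise.finite_measure_mono) auto
  then have "measure noise_law {..reset_level} > 0"
    using noise_law_interval_pos[of "reset_level - 1" reset_level] by simp
  moreover have "measure noise_law {-1..1} > 0" by (rule noise_law_interval_pos) simp
  ultimately show ?thesis unfolding reset_prob_def by simp
qed

lemma prob_reset: "prob {\<omega> \<in> space M. reset (noise_path \<omega>) n} = reset_prob"
proof -
  define W where "W = {n - int q..n}"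
  define A where "A t = (if t = n then {..reset_level} else {-1..1::real})" for t
  have W: "finite W" "W \<noteq> {}" "n \<in> W" unfolding W_def by auto
  have "prob {\<omega> \<in> space M. reset (noise_path \<omega>) n} = prob {\<omega> \<in> space M. \<forall>t\<in>W. noise_path \<omega> t \<in> A t}"
    unfolding reset_iff_window W_def A_def ..
  also have "\<dots> = (\<Prod>t\<in>W. prob {\<omega> \<in> space M. noise_path \<omega> t \<in> A t})"
  proof (rule prob_all_local_events[OF indep, where K = "\<lambda>t. {t}"])
    show "Measurable.pred (PiM {t} (\<lambda>_. borel)) (\<lambda>x. x t \<in> A t)" for t
      by (rule pred_sets2[where N = borel]) (auto simp: A_def)
  qed (use W in \<open>auto simp: disjoint_family_on_def\<close>)
  also have "\<dots> = (\<Prod>t\<in>W. measure noise_law (A t))"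
    by (intro prod.cong refl prob_noise) (simp add: A_def)
  also have "\<dots> = measure noise_law {..reset_level} * (\<Prod>t\<in>W - {n}. measure noise_law {-1..1})"
    using W by (simp add: prod.remove A_def)
  also have "card (W - {n}) = q" using W by (simp add: W_def)
  then have "(\<Prod>t\<in>W - {n}. measure noise_law {-1..1}) = measure noise_law {-1..1} ^ q" by simp
  finally show ?thesis unfolding reset_prob_def .
qed

lemma reset_prob_le_1: "reset_prob \<le> 1"
  using prob_reset[of 0] prob_le_1 by metis

text \<open>No reset among m = T(q+1) consecutive delay-steps: already the T sparse times
  n - t(q+1)d, t < T, are independent non-resets, each of probability 1 - reset_prob.\<close>

lemma prob_no_reset:
  "prob {\<omega> \<in> space M. \<forall>j < T * (q + 1). \<not> reset (noise_path \<omega>) (n - int (j * d))}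
     \<le> (1 - reset_prob) ^ T"
proof (cases "T = 0")
  case False
  define s where "s t = n - int (t * (q + 1) * d)" for t
  define K where "K = (\<lambda>t. {s t - int q .. s t})"
  have disjoint: "disjoint_family_on K {..<T}"
    unfolding K_def s_def by (rule disjoint_family_on_mono[OF subset_UNIV sparse_windows_disjoint[OF d_pos]])
  have "{\<omega> \<in> space M. \<forall>j < T * (q + 1). \<not> reset (noise_path \<omega>) (n - int (j * d))}
      \<subseteq> {\<omega> \<in> space M. \<forall>t\<in>{..<T}. \<not> reset (noise_path \<omega>) (s t)}"
  proof
    fix \<omega> assume \<omega>: "\<omega> \<in> {\<omega> \<in> space M. \<forall>j < T * (q + 1). \<not> reset (noise_path \<omega>) (n - int (j * d))}"
    have "\<not> reset (noise_path \<omega>) (s t)" if "t < T" for t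
    proof -
      have "t * (q + 1) < T * (q + 1)" using that by (intro mult_strict_right_mono) auto
      with \<omega> show ?thesis unfolding s_def by blast
    qed
    with \<omega> show "\<omega> \<in> {\<omega> \<in> space M. \<forall>t\<in>{..<T}. \<not> reset (noise_path \<omega>) (s t)}" by simp
  qed
  then have "prob {\<omega> \<in> space M. \<forall>j < T * (q + 1). \<not> reset (noise_path \<omega>) (n - int (j * d))}
      \<le> prob {\<omega> \<in> space M. \<forall>t\<in>{..<T}. \<not> reset (noise_path \<omega>) (s t)}"
    by (intro finite_measure_mono) measurable
  also have "\<dots> = (\<Prod>t\<in>{..<T}. prob {\<omega> \<in> space M. \<not> reset (noise_path \<omega>) (s t)})"
  proof (rule prob_all_local_events[OF indep disjoint])
    show "Measurable.pred (PiM (K t) (\<lambda>_. borel)) (\<lambda>x. \<not> reset x (s t))" for t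
      using reset_measurable[of "s t" "K t"] by (simp add: K_def)
    show "\<not> reset x (s t) \<longleftrightarrow> \<not> reset x' (s t)" if "\<And>i. i \<in> K t \<Longrightarrow> x i = x' i" for t x x'
      using reset_local[of "s t" x x'] that by (simp add: K_def)
  qed (use False in auto)
  also have "\<dots> = (\<Prod>t\<in>{..<T}. 1 - reset_prob)"
  proof (intro prod.cong refl)
    fix t
    have "{\<omega> \<in> space M. \<not> reset (noise_path \<omega>) (s t)}
        = space M - {\<omega> \<in> space M. reset (noise_path \<omega>) (s t)}"
      by blast
    then show "prob {\<omega> \<in> space M. \<not> reset (noise_path \<omega>) (s t)} = 1 - reset_prob"
      by (simp add: prob_compl prob_reset)
  qed
  finally show ?thesis by simp
qed simp

text \<open>For k > md + q the depth-m truncations at times 0 and k depend on the noise before and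
  after time 0 respectively, so their threshold events are independent.\<close>

lemma prob_trunc_indep:
  assumes "m * d + q < k"
  shows "prob {\<omega> \<in> space M. trunc (noise_path \<omega>) 0 m \<le> u \<and> trunc (noise_path \<omega>) (int k) m \<le> v}
       = prob {\<omega> \<in> space M. trunc (noise_path \<omega>) 0 m \<le> u}
         * prob {\<omega> \<in> space M. trunc (noise_path \<omega>) (int k) m \<le> v}"
proof (rule prob_two_local_events[OF indep])
  have past: "{0 - int (m * d) - int q .. 0} \<subseteq> {..0}" by auto
  have "int (m * d) + int q < int k" using assms by linarith
  then have future: "{int k - int (m * d) - int q .. int k} \<subseteq> {1..}" by auto
  show "Measurable.pred (PiM {..0} (\<lambda>_. borel)) (\<lambda>x. trunc x 0 m \<le> u)"
    using trunc_measurable[OF past] by measurable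
  show "Measurable.pred (PiM {1..} (\<lambda>_. borel)) (\<lambda>x. trunc x (int k) m \<le> v)"
    using trunc_measurable[OF future] by measurable
  show "(trunc x 0 m \<le> u) = (trunc x' 0 m \<le> u)" if "\<And>i. i \<in> {..0} \<Longrightarrow> x i = x' i" for x x'
    using trunc_local[of 0 m x x'] that past by auto
  show "(trunc x (int k) m \<le> v) = (trunc x' (int k) m \<le> v)"
    if "\<And>i. i \<in> {1..} \<Longrightarrow> x i = x' i" for x x'
    using trunc_local[of "int k" m x x'] that future by auto
qed auto

text \<open>The covariance bound at lag k > T(q+1)d + q: combine the independent truncated events with
  the perturbation lemma, the exceptional events being "no reset in the last T(q+1) steps".\<close>

lemma covariance_bound:
  assumes k: "T * (q + 1) * d + q < k"
  shows "\<bar>prob {\<omega> \<in> space M. y 0 \<omega> \<le> u \<and> y (int k) \<omega> \<le> v}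
          - prob {\<omega> \<in> space M. y 0 \<omega> \<le> u} * prob {\<omega> \<in> space M. y (int k) \<omega> \<le> v}\<bar>
         \<le> 4 * (1 - reset_prob) ^ T"
proof -
  define m where "m = T * (q + 1)"
  define A where "A = {\<omega> \<in> space M. y 0 \<omega> \<le> u}"
  define B where "B = {\<omega> \<in> space M. y (int k) \<omega> \<le> v}"
  define A' where "A' = {\<omega> \<in> space M. trunc (noise_path \<omega>) 0 m \<le> u}"
  define B' where "B' = {\<omega> \<in> space M. trunc (noise_path \<omega>) (int k) m \<le> v}"
  define N0 where "N0 = {\<omega> \<in> space M. \<forall>j < m. \<not> reset (noise_path \<omega>) (0 - int d - int (j * d))}"
  define Nk where "Nk = {\<omega> \<in> space M. \<forall>j < m. \<not> reset (noise_path \<omega>) (int k - int d - int (j * d))}"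
  have "A' \<inter> B' = {\<omega> \<in> space M. trunc (noise_path \<omega>) 0 m \<le> u \<and> trunc (noise_path \<omega>) (int k) m \<le> v}"
    by (auto simp: A'_def B'_def)
  moreover have "m * d + q < k" using k by (simp add: m_def)
  ultimately have "prob (A' \<inter> B') = prob A' * prob B'"
    unfolding A'_def B'_def by (simp add: prob_trunc_indep)
  moreover have "A \<in> events" "A' \<in> events" "B \<in> events" "B' \<in> events" "N0 \<in> events" "Nk \<in> events"
    unfolding A_def A'_def B_def B'_def N0_def Nk_def by measurable
  ultimately have "\<bar>prob (A \<inter> B) - prob A * prob B\<bar> \<le> 2 * (prob N0 + prob Nk)"
    using AE_le_iff_trunc[of m 0 u] AE_le_iff_trunc[of m "int k" v]
    by (intro covariance_le_exceptional) (simp_all add: A_def A'_def B_def B'_def N0_def Nk_def)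
  also have "\<dots> \<le> 2 * ((1 - reset_prob) ^ T + (1 - reset_prob) ^ T)"
    unfolding N0_def Nk_def m_def by (intro mult_left_mono add_mono prob_no_reset) auto
  also have "A \<inter> B = {\<omega> \<in> space M. y 0 \<omega> \<le> u \<and> y (int k) \<omega> \<le> v}"
    by (auto simp: A_def B_def)
  finally show ?thesis by (simp add: A_def B_def)
qed

text \<open>Choosing T as large as the lag allows gives decay in blocks of length d(q+1).\<close>

lemma covariance_decay:
  "(\<lambda>k::nat. \<bar>prob {\<omega> \<in> space M. y 0 \<omega> \<le> u \<and> y (int k) \<omega> \<le> v}
      - prob {\<omega> \<in> space M. y 0 \<omega> \<le> u} * prob {\<omega> \<in> space M. y (int k) \<omega> \<le> v}\<bar>)
   \<in> O(\<lambda>k. (1 - reset_prob) ^ ((k - (q + 1)) div (d * (q + 1))))"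
proof (intro bigoI[where c = 4] eventually_at_top_linorderI)
  fix k :: nat assume "q + 1 \<le> k"
  define T where "T = (k - (q + 1)) div (d * (q + 1))"
  have "T * (d * (q + 1)) \<le> k - (q + 1)" unfolding T_def by simp
  then have "T * (q + 1) * d + q < k" using \<open>q + 1 \<le> k\<close> by (simp add: algebra_simps)
  moreover have "0 \<le> 1 - reset_prob" using reset_prob_le_1 by simp
  ultimately show "norm \<bar>prob {\<omega> \<in> space M. y 0 \<omega> \<le> u \<and> y (int k) \<omega> \<le> v}
      - prob {\<omega> \<in> space M. y 0 \<omega> \<le> u} * prob {\<omega> \<in> space M. y (int k) \<omega> \<le> v}\<bar>
    \<le> 4 * norm ((1 - reset_prob) ^ ((k - (q + 1)) div (d * (q + 1))))"
    using covariance_bound[of T k u v] unfolding T_def by simp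
qed

end

theorem theorem3p2:
  fixes M :: "'a measure"
    and e y :: "int \<Rightarrow> 'a \<Rightarrow> real"
    and f :: "real \<Rightarrow> real"
    and q d :: nat
    and r \<mu>1 \<mu>2 :: real
    and \<phi> \<psi> :: "nat \<Rightarrow> real"
  assumes "prob_space M"
    and indep: "prob_space.indep_vars M (\<lambda>_. borel) e UNIV"
    and dens: "\<And>n. distributed M lborel (e n) (\<lambda>x. ennreal (f x))"
    and f_cont: "continuous_on UNIV f"
    and f_bdd: "bounded (range f)"
    and f_pos: "\<And>x. f x > 0"
    and "q \<ge> 1" and "d \<ge> 1"
    and stat: "strictly_stationary M y"
    and sol: "\<And>n. AE \<omega> in M. y n \<omega> =
        (if y (n - int d) \<omega> \<le> r
         then \<mu>1 + e n \<omega> + (\<Sum>i=1..q. \<phi> i * e (n - int i) \<omega>)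
         else \<mu>2 + e n \<omega> + (\<Sum>i=1..q. \<psi> i * e (n - int i) \<omega>))"
  shows "\<exists>\<rho>::real. 0 < \<rho> \<and> \<rho> < 1 \<and>
    (\<forall>u v::real.
      (\<lambda>k::nat. \<bar>measure M {\<omega> \<in> space M. y 0 \<omega> \<le> u \<and> y (int k) \<omega> \<le> v}
                 - measure M {\<omega> \<in> space M. y 0 \<omega> \<le> u}
                   * measure M {\<omega> \<in> space M. y (int k) \<omega> \<le> v}\<bar>)
      \<in> O(\<lambda>k. \<rho> ^ k))"
proof -
  have y_measurable: "\<And>n. y n \<in> borel_measurable M"
    using stat by (simp add: strictly_stationary_def)
  interpret tma_model q d r \<mu>1 \<mu>2 \<phi> \<psi> M e y f
    by (intro tma_model.intro tma_model_axioms.intro)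
      (fact \<open>prob_space M\<close> indep dens f_pos \<open>d \<ge> 1\<close> y_measurable sol)+
  obtain \<rho> where \<rho>: "0 < \<rho>" "\<rho> < 1"
    and decay: "(\<lambda>k::nat. (1 - reset_prob) ^ ((k - (q + 1)) div (d * (q + 1)))) \<in> O(\<lambda>k. \<rho> ^ k)"
    using power_div_bigo_geometric[of "1 - reset_prob" "d * (q + 1)" "q + 1"]
      reset_prob_pos reset_prob_le_1 \<open>d \<ge> 1\<close> by auto
  show ?thesis
    using \<rho> landau_o.big_trans[OF covariance_decay decay] by blast
qed

end
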